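(* The distribution of a consistent sequence of exchangeable random permutations $(\boldsymbol\pi_n)_{n\geq1}$ is determined by the following predictive scheme. For any $\pi\in\mathcal S_n$ with $\mathrm{c}(\pi)=(n_1,\dots,n_k)$, if $\sigma^{(j)}\in\mathcal A(\pi)\subset\mathcal S_{n+1}$ is such that $z_{n+1}(\sigma^{(j)})=j$, then $$P(\boldsymbol\pi_{n+1}=\sigma^{(j)}\mid\boldsymbol\pi_n=\pi)=\begin{cases}\frac{1}{n_j}\frac{\varphi_k^{(n+1)}(n_1,\dots,n_j+1,\dots,n_k)}{\varphi_k^{(n)}(n_1,\dots,n_k)}&1\leq j\leq k\\ \frac{\varphi_{k+1}^{(n+1)}(n_1,\dots,n_k,1)}{\varphi_k^{(n)}(n_1,\dots,n_k)}&j=k+1\end{cases}$$ where $(\varphi^{(n)})_{n\geq1}$ is the EPPF of $(\mathrm{z}(\boldsymbol\pi_n))_{n\geq1}$. If $\sigma\notin\mathcal A(\pi)$, then $P(\boldsymbol\pi_{n+1}=\sigma\mid\boldsymbol\pi_n=\pi)=0$.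
   Context: $\mathcal S_n$ is the symmetric group on $[n]$. For $\pi\in\mathcal S_n$, $\mathrm{c}(\pi)$ is its vector of cycle lengths and $\mathrm{z}(\pi)=(z_1(\pi),\dots,z_n(\pi))$ its cycle structure, with $z_i(\pi)$ the ordinal of the cycle containing $i$ (cycles written starting from their least element and ordered by first elements, i.e. labels in order of appearance). The deletion map $\operatorname{del}:\mathcal S_{n+1}\to\mathcal S_n$ is $\operatorname{del}(\sigma)(i)=\sigma(i)$ if $i\neq\sigma^{-1}(n+1)$ and $\operatorname{del}(\sigma)(i)=\sigma(n+1)$ if $i=\sigma^{-1}(n+1)$; $\mathcal A(\pi)=\{\sigma\in\mathcal S_{n+1}:\operatorname{del}(\sigma)=\pi\}$ is the set of the $n+1$ permutations obtained by inserting $n+1$ into the cycle representation of $\pi$ (to the left of any element of an existing cycle, or as a new singleton cycle). A sequence $(\boldsymbol\pi_n)$, $\boldsymbol\pi_n\in\mathcal S_n$, is consistent if $\operatorname{del}(\boldsymbol\pi_{n+1})\overset{d}{=}\boldsymbol\pi_n$; each $\boldsymbol\pi_n$ is exchangeable, i.e. its pmf is $\varphi^{(n)}_k(n_1,\dots,n_k)/\prod_{j=1}^k(n_j-1)!$ for an EPPF $(\varphi^{(n)})$ (symmetric functions satisfying $\varphi^{(1)}_1(1)=1$ and $\varphi_k^{(n)}(n_1,\dots,n_k)=\sum_{j=1}^k\varphi_k^{(n+1)}(n_1,\dots,n_j+1,\dots,n_k)+\varphi_{k+1}^{(n+1)}(n_1,\dots,n_k,1)$), with $(n_1,\dots,n_k)$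 the cycle lengths. *)

theory Defs
  imports "HOL-Probability.Probability" "HOL-Combinatorics.Combinatorics"
begin

text \<open>Permutations of [n] = {1..n} are functions nat => nat with  p permutes {1..n}.\<close>

definition cycle_leader :: "(nat \<Rightarrow> nat) \<Rightarrow> nat \<Rightarrow> bool" where
  "cycle_leader p m \<longleftrightarrow> m = Min (orbit p m)"

definition cycle_lengths :: "nat \<Rightarrow> (nat \<Rightarrow> nat) \<Rightarrow> nat list" where
  "cycle_lengths n p = map (\<lambda>m. card (orbit p m)) (filter (cycle_leader p) [1..<n+1])"

text \<open>z_i(pi): ordinal (1-based) of the cycle containing i.\<close>
definition cycle_label :: "(nat \<Rightarrow> nat) \<Rightarrow> nat \<Rightarrow> nat" where
  "cycle_label p i = card {m. 1 \<le> m \<and> m \<le> Min (orbit p i) \<and> cycle_leader p m}"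

definition del :: "nat \<Rightarrow> (nat \<Rightarrow> nat) \<Rightarrow> nat \<Rightarrow> nat" where
  "del n s = (\<lambda>i. if i \<in> {1..n} then (if s i = n + 1 then s (n + 1) else s i) else i)"

definition ins_set :: "nat \<Rightarrow> (nat \<Rightarrow> nat) \<Rightarrow> (nat \<Rightarrow> nat) set" where
  "ins_set n p = {s. s permutes {1..n+1} \<and> del n s = p}"

text \<open>Compositions of n: lists of positive integers summing to n
  (the admissible arguments (n_1,...,n_k) of phi^(n)_k, with k = length).\<close>
definition compositions :: "nat \<Rightarrow> nat list set" where
  "compositions n = {xs. (\<forall>x\<in>set xs. 0 < x) \<and> sum_list xs = n}"

text \<open>EPPF: phi n xs stands for phi^(n)_k(n_1,...,n_k), xs = [n_1,...,n_k].\<close>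
definition is_EPPF :: "(nat \<Rightarrow> nat list \<Rightarrow> real) \<Rightarrow> bool" where
  "is_EPPF phi \<longleftrightarrow>
     (\<forall>n xs ys. xs \<in> compositions n \<and> mset xs = mset ys \<longrightarrow> phi n xs = phi n ys) \<and>
     phi 1 [1] = 1 \<and>
     (\<forall>n\<ge>1. \<forall>xs \<in> compositions n.
        phi n xs = (\<Sum>j<length xs. phi (n + 1) (xs[j := xs ! j + 1])) + phi (n + 1) (xs @ [1]))"

end

theory Submission
  imports Defs
begin

(* Consistency holds almost surely, so the event {pi_(n+1) = s, pi_n = p} is a.s. equal to
   {pi_(n+1) = s} if del s = p and is null otherwise; the transition probability is therefore a
   ratio of two values of the exchangeable pmf.  If b is the preimage of n+1 under s, then
   s = p o (b n+1).  Either b = n+1 and n+1 is a new singleton cycle, or n+1 is inserted into the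
   cycle of p through b: that cycle grows by one, no other cycle changes, and the least elements
   of all cycles stay the same, so the cycle order is preserved and z_(n+1)(s) = z_b(p).  The
   factor 1/n_j is the ratio (n_j - 1)! / n_j! of the weights in the two pmfs. *)

section \<open>Inserting a fixed point into a cycle\<close>

lemma orbit_subset_closed:
  assumes "f x \<in> T" and "\<And>y. y \<in> T \<Longrightarrow> f y \<in> T"
  shows "orbit f x \<subseteq> T"
proof
  fix y assume "y \<in> orbit f x"
  then show "y \<in> T" by induct (use assms in auto)
qed

lemma Min_orbit_in_orbit:
  assumes "permutation p"
  shows "Min (orbit p x) \<in> orbit p x"
  using finite_orbit[OF permutation_self_in_orbit[OF assms]] orbit_nonempty by (rule Min_in)

lemma orbit_eq_orbit_of_mem:
  assumes "permutation p" and "y \<in> orbit p x"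
  shows "orbit p y = orbit p x"
  using orbit_cyclic_eq3[OF cyclic_on_orbit'[OF assms(1)] assms(2)] .

lemma fixpoint_notin_orbit:
  assumes "permutation p" and "p a = a" and "x \<noteq> a"
  shows "a \<notin> orbit p x"
proof
  assume "a \<in> orbit p x"
  then have "orbit p x = {a}"
    using orbit_eq_orbit_of_mem[OF assms(1)] assms(2) by (metis orbit_eq_singleton_iff)
  then show False using permutation_self_in_orbit[OF assms(1), of x] assms(3) by simp
qed

context
  fixes p :: "'a \<Rightarrow> 'a" and a b :: 'a
  assumes perm: "permutation p" and fixed: "p a = a" and ne: "b \<noteq> a"
begin

lemma orbit_comp_transpose_inserted:
  "orbit (p \<circ> Transposition.transpose b a) a = insert a (orbit p b)"
proof
  let ?s = "p \<circ> Transposition.transpose b a"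
  show "orbit ?s a \<subseteq> insert a (orbit p b)"
  proof (rule orbit_subset_closed)
    fix y assume "y \<in> insert a (orbit p b)"
    then show "?s y \<in> insert a (orbit p b)"
      using ne fixed by (cases "y = a \<or> y = b") (auto intro: orbit.intros)
  qed (use ne in \<open>auto intro: orbit.intros\<close>)
  have "orbit p b \<subseteq> orbit ?s a"
  proof (rule orbit_subset_closed)
    show "p b \<in> orbit ?s a" using orbit.base[of ?s a] by simp
    fix y assume y: "y \<in> orbit ?s a"
    show "p y \<in> orbit ?s a"
    proof (cases "y = a \<or> y = b")
      case True then show ?thesis
        using y fixed orbit.base[of ?s a] by auto
    next
      case False then show ?thesis
        using orbit.step[OF y] by auto
    qed
  qed
  moreover have "a \<in> orbit ?s a"
    by (intro permutation_self_in_orbit permutation_compose perm permutation_swap_id)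
  ultimately show "insert a (orbit p b) \<subseteq> orbit ?s a" by blast
qed

lemma orbit_comp_transpose_in_orbit:
  assumes "x \<in> orbit p b"
  shows "orbit (p \<circ> Transposition.transpose b a) x = insert a (orbit p b)"
proof -
  have "permutation (p \<circ> Transposition.transpose b a)"
    by (intro permutation_compose perm permutation_swap_id)
  moreover have "x \<in> orbit (p \<circ> Transposition.transpose b a) a"
    using assms orbit_comp_transpose_inserted by simp
  ultimately show ?thesis
    using orbit_eq_orbit_of_mem orbit_comp_transpose_inserted by metis
qed

lemma orbit_comp_transpose_notin_orbit:
  assumes "x \<noteq> a" and "x \<notin> orbit p b"
  shows "orbit (p \<circ> Transposition.transpose b a) x = orbit p x"
proof (rule orbit_cong)
  show "x \<in> orbit p x" using perm by (rule permutation_self_in_orbit)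
  fix y assume y: "y \<in> orbit p x"
  have "y \<noteq> a" using y fixpoint_notin_orbit[OF perm fixed assms(1)] by blast
  moreover have "y \<noteq> b"
  proof
    assume "y = b"
    then have "orbit p b = orbit p x" using y orbit_eq_orbit_of_mem[OF perm] by simp
    then show False using assms(2) permutation_self_in_orbit[OF perm, of x] by simp
  qed
  ultimately show "(p \<circ> Transposition.transpose b a) y = p y" by simp
qed

end

lemma del_eq_comp_transpose:
  assumes s: "s permutes {1..n+1}"
  shows "del n s = s \<circ> Transposition.transpose (inv s (n+1)) (n+1)"
proof
  fix i
  define b where "b = inv s (n+1)"
  have sb: "s b = n+1" unfolding b_def using s by (simp add: permutes_inverses(1))
  have b: "b \<in> {1..n+1}"
    unfolding b_def using permutes_in_image[OF permutes_inv[OF s]] by simp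
  have si: "s i = n+1 \<longleftrightarrow> i = b" using sb permutes_inj[OF s] by (metis injD)
  consider "i = b" | "i \<noteq> b" "i = n+1" | "i \<noteq> b" "i \<noteq> n+1" "i \<in> {1..n}" | "i \<notin> {1..n+1}"
    by fastforce
  then show "del n s i = (s \<circ> Transposition.transpose b (n+1)) i"
  proof cases
    case 1 then show ?thesis using b sb by (cases "b = n+1") (auto simp: del_def)
  next
    case 2 then show ?thesis using sb by (simp add: del_def)
  next
    case 3 then show ?thesis using si by (simp add: del_def)
  next
    case 4 then show ?thesis using b permutes_not_in[OF s] by (auto simp: del_def)
  qed
qed

section \<open>Cycle leaders\<close>

definition cycle_leaders :: "nat \<Rightarrow> (nat \<Rightarrow> nat) \<Rightarrow> nat list" where
  "cycle_leaders n p = filter (cycle_leader p) [1..<n+1]"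

lemma in_set_cycle_leaders_iff:
  "m \<in> set (cycle_leaders n p) \<longleftrightarrow> m \<in> {1..n} \<and> cycle_leader p m"
  by (auto simp: cycle_leaders_def simp del: upt_Suc)

lemma distinct_cycle_leaders: "distinct (cycle_leaders n p)"
  by (simp add: cycle_leaders_def)

lemma cycle_lengths_conv_cycle_leaders:
  "cycle_lengths n p = map (\<lambda>m. card (orbit p m)) (cycle_leaders n p)"
  by (simp add: cycle_lengths_def cycle_leaders_def)

lemma length_filter_upt_eq_card:
  "length (filter P [1..<k+1]) = card {m. 1 \<le> m \<and> m \<le> k \<and> P m}"
proof -
  have "{m. 1 \<le> m \<and> m \<le> k \<and> P m} = {m. P m} \<inter> set [1..<k+1]" by auto
  then show ?thesis by (simp add: distinct_length_filter)
qed

lemma cycle_label_conv_cycle_leaders: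
  "cycle_label p x = length (cycle_leaders (Min (orbit p x)) p)"
  unfolding cycle_label_def cycle_leaders_def length_filter_upt_eq_card ..

lemma cycle_leaders_cong:
  assumes "\<And>x. x \<in> {1..n} \<Longrightarrow> cycle_leader q x \<longleftrightarrow> cycle_leader p x"
  shows "cycle_leaders n q = cycle_leaders n p"
  unfolding cycle_leaders_def
proof (rule filter_cong[OF refl])
  fix x assume "x \<in> set [1..<n+1]"
  then show "cycle_leader q x \<longleftrightarrow> cycle_leader p x" by (intro assms) auto
qed

lemma cycle_leaders_Suc:
  "cycle_leaders (Suc n) p = cycle_leaders n p @ (if cycle_leader p (Suc n) then [Suc n] else [])"
  by (simp add: cycle_leaders_def)

lemma cycle_leaders_append:
  assumes "m \<le> n"
  shows "cycle_leaders n p = cycle_leaders m p @ filter (cycle_leader p) [m+1..<n+1]"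
proof -
  have "[1..<n+1] = [1..<m+1] @ [m+1..<n+1]"
    using assms upt_add_eq_append[of 1 "m+1" "n-m"] by simp
  then show ?thesis by (simp add: cycle_leaders_def)
qed

lemma permutes_interval_imp_permutation:
  fixes p :: "nat \<Rightarrow> nat"
  shows "p permutes {1..n} \<Longrightarrow> permutation p"
  using permutes_imp_permutation[of "{1..n}" p] by simp

lemma cycle_leader_Min_orbit:
  assumes "permutation p"
  shows "cycle_leader p (Min (orbit p x))"
  unfolding cycle_leader_def
  using orbit_eq_orbit_of_mem[OF assms Min_orbit_in_orbit[OF assms]] by simp

lemma cycle_leader_in_orbit_iff:
  assumes "permutation p" and "cycle_leader p m"
  shows "m \<in> orbit p x \<longleftrightarrow> m = Min (orbit p x)"
proof
  assume "m \<in> orbit p x"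
  then show "m = Min (orbit p x)"
    using assms(2) orbit_eq_orbit_of_mem[OF assms(1)] unfolding cycle_leader_def by metis
qed (use Min_orbit_in_orbit[OF assms(1)] in simp)

lemma Min_orbit_in_range:
  fixes p :: "nat \<Rightarrow> nat"
  assumes "p permutes {1..n}" and "x \<in> {1..n}"
  shows "Min (orbit p x) \<in> {1..n}"
  using permutes_orbit_subset[OF assms]
    Min_orbit_in_orbit[OF permutes_interval_imp_permutation[OF assms(1)]]
  by blast

lemma cycle_leaders_nth_cycle_label:
  assumes "p permutes {1..n}" and "x \<in> {1..n}"
  shows "0 < cycle_label p x" and "cycle_label p x \<le> length (cycle_leaders n p)"
    and "cycle_leaders n p ! (cycle_label p x - 1) = Min (orbit p x)"
proof -
  define r where "r = Min (orbit p x)"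
  have r: "Suc (r - 1) = r" "r \<le> n" using Min_orbit_in_range[OF assms] unfolding r_def by auto
  have "cycle_leader p r"
    unfolding r_def using assms(1) by (intro cycle_leader_Min_orbit permutes_interval_imp_permutation)
  then have "cycle_leaders r p = cycle_leaders (r - 1) p @ [r]"
    using cycle_leaders_Suc[of "r - 1" p] r(1) by simp
  moreover have label: "cycle_label p x = length (cycle_leaders r p)"
    unfolding r_def by (rule cycle_label_conv_cycle_leaders)
  moreover note cycle_leaders_append[OF r(2), of p]
  ultimately show "0 < cycle_label p x" and "cycle_label p x \<le> length (cycle_leaders n p)"
    and "cycle_leaders n p ! (cycle_label p x - 1) = r"
    by (simp_all add: nth_append)
qed

lemma cycle_lengths_nth_cycle_label:
  assumes "p permutes {1..n}" and "x \<in> {1..n}"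
  shows "cycle_lengths n p ! (cycle_label p x - 1) = card (orbit p x)"
proof -
  have "permutation p" using assms(1) by (rule permutes_interval_imp_permutation)
  then have orb: "orbit p (Min (orbit p x)) = orbit p x"
    by (intro orbit_eq_orbit_of_mem Min_orbit_in_orbit)
  have "cycle_lengths n p ! (cycle_label p x - 1)
      = card (orbit p (cycle_leaders n p ! (cycle_label p x - 1)))"
    using cycle_leaders_nth_cycle_label(1,2)[OF assms]
    by (simp add: cycle_lengths_conv_cycle_leaders)
  also have "\<dots> = card (orbit p x)"
    unfolding cycle_leaders_nth_cycle_label(3)[OF assms] orb ..
  finally show ?thesis .
qed

lemma cycle_lengths_pos:
  assumes "permutation p" and "l \<in> set (cycle_lengths n p)"
  shows "0 < l"
proof -
  obtain m where "l = card (orbit p m)"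
    using assms(2) by (auto simp: cycle_lengths_conv_cycle_leaders)
  then show ?thesis
    using finite_orbit[OF permutation_self_in_orbit[OF assms(1)]] orbit_nonempty
    by (simp add: card_gt_0_iff)
qed

section \<open>Cycle structure after inserting \<open>n + 1\<close>\<close>

lemma cycle_lengths_new_cycle:
  fixes p :: "nat \<Rightarrow> nat"
  assumes "p permutes {1..n}"
  shows "cycle_lengths (n+1) p = cycle_lengths n p @ [1]"
    and "cycle_label p (n+1) = length (cycle_lengths n p) + 1"
proof -
  have orb: "orbit p (n+1) = {n+1}"
    using permutes_not_in[OF assms] by (simp add: orbit_eq_singleton_iff)
  then have leaders: "cycle_leaders (n+1) p = cycle_leaders n p @ [n+1]"
    using cycle_leaders_Suc[of n p] by (simp add: cycle_leader_def)
  then show "cycle_lengths (n+1) p = cycle_lengths n p @ [1]"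
    using orb by (simp add: cycle_lengths_conv_cycle_leaders)
  show "cycle_label p (n+1) = length (cycle_lengths n p) + 1"
    using orb leaders by (simp add: cycle_label_conv_cycle_leaders cycle_lengths_conv_cycle_leaders)
qed

context
  fixes n b :: nat and p s :: "nat \<Rightarrow> nat"
  assumes p: "p permutes {1..n}" and b: "b \<in> {1..n}"
    and s: "s = p \<circ> Transposition.transpose b (Suc n)"
begin

private lemma perm: "permutation p"
  using p by (rule permutes_interval_imp_permutation)

private lemma fixed: "p (Suc n) = Suc n"
  using permutes_not_in[OF p] by simp

lemma orbit_inserted_new_point: "orbit s (Suc n) = insert (Suc n) (orbit p b)"
  unfolding s using b by (intro orbit_comp_transpose_inserted perm fixed) auto

lemma orbit_inserted:
  assumes "x \<in> {1..n}"
  shows "orbit s x = (if x \<in> orbit p b then insert (Suc n) (orbit p x) else orbit p x)"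
  using assms b orbit_comp_transpose_in_orbit[OF perm fixed, of b x]
    orbit_comp_transpose_notin_orbit[OF perm fixed, of b x] orbit_eq_orbit_of_mem[OF perm]
  unfolding s by auto

lemma Min_orbit_inserted:
  assumes "x \<in> {1..n}"
  shows "Min (orbit s x) = Min (orbit p x)"
proof -
  have "Min (orbit p x) \<le> n" using Min_orbit_in_range[OF p assms] by simp
  then show ?thesis
    using Min.insert[OF finite_orbit[OF permutation_self_in_orbit[OF perm]] orbit_nonempty]
    by (simp add: orbit_inserted[OF assms])
qed

lemma Min_orbit_inserted_new_point: "Min (orbit s (Suc n)) = Min (orbit p b)"
proof -
  have "Min (orbit p b) \<le> n" using Min_orbit_in_range[OF p b] by simp
  then show ?thesis
    unfolding orbit_inserted_new_point
    using Min.insert[OF finite_orbit[OF permutation_self_in_orbit[OF perm]] orbit_nonempty]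
    by simp
qed

lemma cycle_leaders_inserted: "cycle_leaders (Suc n) s = cycle_leaders n p"
proof -
  have "\<not> cycle_leader s (Suc n)"
    using Min_orbit_inserted_new_point Min_orbit_in_range[OF p b] by (simp add: cycle_leader_def)
  moreover have "cycle_leaders n s = cycle_leaders n p"
    by (rule cycle_leaders_cong) (simp add: cycle_leader_def Min_orbit_inserted)
  ultimately show ?thesis using cycle_leaders_Suc[of n s] by simp
qed

lemma cycle_label_inserted: "cycle_label s (Suc n) = cycle_label p b"
proof -
  define r where "r = Min (orbit p b)"
  have "r \<le> n" using Min_orbit_in_range[OF p b] unfolding r_def by simp
  then have "cycle_leaders r s = cycle_leaders r p"
    by (intro cycle_leaders_cong) (simp add: cycle_leader_def Min_orbit_inserted)
  then show ?thesis
    by (simp add: cycle_label_conv_cycle_leaders Min_orbit_inserted_new_point r_def)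
qed

lemma card_orbit_inserted:
  assumes "x \<in> {1..n}"
  shows "card (orbit s x) = card (orbit p x) + (if x \<in> orbit p b then 1 else 0)"
proof -
  have "Suc n \<notin> orbit p x" using assms fixpoint_notin_orbit[OF perm fixed] by simp
  then show ?thesis
    using finite_orbit[OF permutation_self_in_orbit[OF perm]] by (simp add: orbit_inserted[OF assms])
qed

lemma cycle_lengths_inserted:
  "cycle_lengths (Suc n) s = (cycle_lengths n p)[cycle_label p b - 1 := card (orbit p b) + 1]"
  (is "?lhs = ?rhs")
proof (rule nth_equalityI)
  define L where "L = cycle_leaders n p"
  define i where "i = cycle_label p b - 1"
  have i: "i < length L" "L ! i = Min (orbit p b)"
    using cycle_leaders_nth_cycle_label[OF p b] unfolding L_def i_def by auto
  show "length ?lhs = length ?rhs"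
    by (simp add: cycle_lengths_conv_cycle_leaders cycle_leaders_inserted)
  fix k assume "k < length ?lhs"
  then have k: "k < length L"
    unfolding L_def by (simp add: cycle_lengths_conv_cycle_leaders cycle_leaders_inserted)
  then have "L ! k \<in> set L" by simp
  then have Lk: "L ! k \<in> {1..n}" "cycle_leader p (L ! k)"
    unfolding L_def in_set_cycle_leaders_iff by auto
  have "L ! k \<in> orbit p b \<longleftrightarrow> k = i"
    using cycle_leader_in_orbit_iff[OF perm Lk(2)] i k
      nth_eq_iff_index_eq[OF distinct_cycle_leaders[of n p], of k i]
    unfolding L_def by auto
  moreover have "orbit p (L ! i) = orbit p b"
    using i(2) orbit_eq_orbit_of_mem[OF perm] Min_orbit_in_orbit[OF perm] by simp
  ultimately show "?lhs ! k = ?rhs ! k"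
    using k card_orbit_inserted[OF Lk(1)]
    by (auto simp: cycle_lengths_conv_cycle_leaders cycle_leaders_inserted L_def[symmetric] i_def)
qed

end

lemma cycle_lengths_del_cases:
  fixes p s :: "nat \<Rightarrow> nat"
  assumes p: "p permutes {1..n}" and s: "s permutes {1..n+1}" and del: "del n s = p"
  obtains (new_cycle)
      "cycle_lengths (n+1) s = cycle_lengths n p @ [1]"
      "cycle_label s (n+1) = length (cycle_lengths n p) + 1"
    | (old_cycle)
      "0 < cycle_label s (n+1)" "cycle_label s (n+1) \<le> length (cycle_lengths n p)"
      "cycle_lengths (n+1) s = (cycle_lengths n p)
         [cycle_label s (n+1) - 1 := cycle_lengths n p ! (cycle_label s (n+1) - 1) + 1]"
proof -
  define b where "b = inv s (n+1)"
  have "s = del n s \<circ> Transposition.transpose b (n+1)"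
    unfolding del_eq_comp_transpose[OF s] b_def by (simp add: comp_assoc)
  then have s_eq: "s = p \<circ> Transposition.transpose b (n+1)"
    unfolding del .
  have b_range: "b \<in> {1..n+1}"
    unfolding b_def using permutes_in_image[OF permutes_inv[OF s]] by simp
  show thesis
  proof (cases "b = n+1")
    case True
    then have "s = p" using s_eq by simp
    then show thesis using new_cycle cycle_lengths_new_cycle[OF p] by simp
  next
    case False
    then have b: "b \<in> {1..n}" "s = p \<circ> Transposition.transpose b (Suc n)"
      using b_range s_eq by auto
    then show thesis
      using old_cycle cycle_label_inserted[OF p b] cycle_lengths_inserted[OF p b]
        cycle_leaders_nth_cycle_label(1,2)[OF p b(1)] cycle_lengths_nth_cycle_label[OF p b(1)]
      by (simp add: cycle_lengths_conv_cycle_leaders)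
  qed
qed

section \<open>Transition probabilities\<close>

lemma measure_Collect_conj_eq_if_AE:
  assumes AE: "AE \<omega> in M. f (Y \<omega>) = Z \<omega>"
    and Y: "Y \<in> measurable M (count_space UNIV)" and Z: "Z \<in> measurable M (count_space UNIV)"
  shows "measure M {\<omega> \<in> space M. Y \<omega> = y \<and> Z \<omega> = z}
       = (if f y = z then measure M {\<omega> \<in> space M. Y \<omega> = y} else 0)"
proof -
  have sets: "{\<omega> \<in> space M. Y \<omega> = y} \<in> sets M" "{\<omega> \<in> space M. Z \<omega> = z} \<in> sets M"
    using pred_count_space_const1[OF Y] pred_count_space_const1[OF Z] by (simp_all add: pred_def)
  then have joint: "{\<omega> \<in> space M. Y \<omega> = y \<and> Z \<omega> = z} \<in> sets M"
    by (simp add: Collect_conj_eq[symmetric] sets.Int)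
  show ?thesis
  proof (cases "f y = z")
    case True
    have "AE \<omega> in M. \<omega> \<in> {\<omega> \<in> space M. Y \<omega> = y \<and> Z \<omega> = z} \<longleftrightarrow> \<omega> \<in> {\<omega> \<in> space M. Y \<omega> = y}"
      using AE by eventually_elim (use True in auto)
    then show ?thesis using True joint sets(1) by (simp add: measure_eq_AE)
  next
    case False
    have "AE \<omega> in M. \<omega> \<in> {\<omega> \<in> space M. Y \<omega> = y \<and> Z \<omega> = z} \<longleftrightarrow> \<omega> \<in> {}"
      using AE by eventually_elim (use False in auto)
    then have "measure M {\<omega> \<in> space M. Y \<omega> = y \<and> Z \<omega> = z} = measure M {}"
      using joint by (intro measure_eq_AE) auto
    then show ?thesis using False by simp
  qed
qed

lemma prod_list_fact_update_Suc:
  assumes "i < length xs" and "0 < xs ! i"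
  shows "(\<Prod>l\<leftarrow>xs[i := xs ! i + 1]. fact (l - 1) :: 'a :: {semiring_char_0, comm_semiring_1})
       = of_nat (xs ! i) * (\<Prod>l\<leftarrow>xs. fact (l - 1))"
proof -
  obtain A B where xs: "xs = A @ xs ! i # B" and A: "i = length A"
    using id_take_nth_drop[OF assms(1)] assms(1) by (metis length_take min.absorb4)
  have "fact (xs ! i) = (of_nat (xs ! i) * fact (xs ! i - 1) :: 'a)"
    using assms(2) by (rule fact_reduce)
  moreover have "xs[i := xs ! i + 1] = A @ (xs ! i + 1) # B"
    using list_update_length[of A "xs ! i" B] xs A by metis
  ultimately show ?thesis
    by (subst (3) xs) (simp add: mult_ac)
qed

lemma prod_list_fact_pos: "0 < (\<Prod>l\<leftarrow>xs. fact (l - 1) :: 'a :: linordered_semidom)"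
  by (induction xs) simp_all

lemma pmf_ratio_del:
  fixes phi :: "nat \<Rightarrow> nat list \<Rightarrow> real" and p s :: "nat \<Rightarrow> nat"
  assumes p: "p permutes {1..n}" and s: "s permutes {1..n+1}" and del: "del n s = p"
    and nonzero: "phi n (cycle_lengths n p) \<noteq> 0"
  shows "(phi (n+1) (cycle_lengths (n+1) s) / (\<Prod>l\<leftarrow>cycle_lengths (n+1) s. fact (l - 1))) /
           (phi n (cycle_lengths n p) / (\<Prod>l\<leftarrow>cycle_lengths n p. fact (l - 1))) =
         (let c = cycle_lengths n p; k = length c; j = cycle_label s (n + 1) in
            if j \<le> k then
              (1 / real (c ! (j - 1))) * (phi (n + 1) (c[j - 1 := c ! (j - 1) + 1]) / phi n c)
            else phi (n + 1) (c @ [1]) / phi n c)"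
  using p s del
proof (cases rule: cycle_lengths_del_cases)
  case new_cycle
  then show ?thesis
    using nonzero prod_list_fact_pos[of "cycle_lengths n p", where 'a=real] by (simp add: Let_def)
next
  case old_cycle
  define c where "c = cycle_lengths n p"
  obtain i where j: "cycle_label s (n+1) = Suc i"
    using old_cycle(1) gr0_implies_Suc by blast
  have "i < length c" using old_cycle(2) j unfolding c_def by simp
  then have "0 < c ! i"
    unfolding c_def
    by (intro cycle_lengths_pos[OF permutes_interval_imp_permutation[OF p], of _ n] nth_mem)
  then have "(\<Prod>l\<leftarrow>cycle_lengths (n+1) s. fact (l - 1)) = real (c ! i) * (\<Prod>l\<leftarrow>c. fact (l - 1))"
    using old_cycle(3) prod_list_fact_update_Suc[OF \<open>i < length c\<close>] j by (simp add: c_def)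
  then show ?thesis
    using old_cycle j nonzero prod_list_fact_pos[of c, where 'a=real] \<open>0 < c ! i\<close>
    by (simp add: c_def[symmetric] Let_def)
qed

theorem proposition3:
  fixes M :: "'w measure"
    and X :: "nat \<Rightarrow> 'w \<Rightarrow> (nat \<Rightarrow> nat)"
    and phi :: "nat \<Rightarrow> nat list \<Rightarrow> real"
    and n :: nat and p s :: "nat \<Rightarrow> nat"
  assumes "prob_space M"
    and meas: "\<And>m. m \<ge> 1 \<Longrightarrow> X m \<in> measurable M (count_space UNIV)"
    and perm: "\<And>m \<omega>. m \<ge> 1 \<Longrightarrow> \<omega> \<in> space M \<Longrightarrow> X m \<omega> permutes {1..m}"
    and consistent: "\<And>m. m \<ge> 1 \<Longrightarrow> AE \<omega> in M. del m (X (m + 1) \<omega>) = X m \<omega>"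
    and eppf: "is_EPPF phi"
    and exch: "\<And>m q. m \<ge> 1 \<Longrightarrow> q permutes {1..m} \<Longrightarrow>
        measure M {\<omega> \<in> space M. X m \<omega> = q} =
          phi m (cycle_lengths m q) / (\<Prod>l\<leftarrow>cycle_lengths m q. fact (l - 1))"
    and n: "n \<ge> 1"
    and p: "p permutes {1..n}"
    and pos: "measure M {\<omega> \<in> space M. X n \<omega> = p} > 0"
    and s: "s permutes {1..n+1}"
  shows "measure M {\<omega> \<in> space M. X (n+1) \<omega> = s \<and> X n \<omega> = p} /
           measure M {\<omega> \<in> space M. X n \<omega> = p} =
         (if s \<in> ins_set n p then
            (let c = cycle_lengths n p; k = length c; j = cycle_label s (n + 1) in
              if j \<le> k then
                (1 / real (c ! (j - 1))) * (phi (n + 1) (c[j - 1 := c ! (j - 1) + 1]) / phi n c)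
              else phi (n + 1) (c @ [1]) / phi n c)
          else 0)"
proof -
  have meas_n: "X n \<in> measurable M (count_space UNIV)" "X (n+1) \<in> measurable M (count_space UNIV)"
    using meas n by simp_all
  have joint: "measure M {\<omega> \<in> space M. X (n+1) \<omega> = s \<and> X n \<omega> = p}
      = (if s \<in> ins_set n p then measure M {\<omega> \<in> space M. X (n+1) \<omega> = s} else 0)"
    using measure_Collect_conj_eq_if_AE[OF consistent[OF n] meas_n(2,1)] s
    by (simp add: ins_set_def)
  have "phi n (cycle_lengths n p) \<noteq> 0"
    using pos exch[OF n p] by auto
  then show ?thesis
    using joint exch[OF n p] exch[OF _ s] pmf_ratio_del[OF p s]
    by (simp add: ins_set_def)
qed

end
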